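(* Let $(b,c)$ be a weighted graph over $V$ and $m$ a measure on $V$ satisfying condition (A). Let $\alpha>0$, $p\in[1,\infty)$ and $u\in\ell^p(V,m)\cap\widetilde F$ with $(\widetilde L+\alpha)u\ge0$ on $V$. Then $u\ge0$. In particular, every $u\in\ell^p(V,m)\cap\widetilde F$ with $(\widetilde L+\alpha)u=0$ satisfies $u\equiv0$.
   Context: Let $V$ be a countably infinite set. A weighted graph over $V$ is a pair $(b,c)$ of maps $b:V\times V\to[0,\infty)$ and $c:V\to[0,\infty)$ with $b(x,x)=0$, $b(x,y)=b(y,x)$ and $\sum_{y\in V}b(x,y)<\infty$ for all $x,y\in V$. A measure on $V$ is a map $m:V\to(0,\infty)$; $\ell^p(V,m)$ is the space of real functions $u$ with $\sum_x m(x)|u(x)|^p<\infty$. Let $\widetilde F=\{u:V\to\mathbb R:\ \sum_y b(x,y)|u(y)|<\infty\text{ for all }x\}$ and define $\widetilde Lu(x)=\frac1{m(x)}\sum_y b(x,y)(u(x)-u(y))+\frac{c(x)}{m(x)}u(x)$ for $u\in\widetilde F$. Condition (A): for every sequence $(x_n)_{n\in\mathbb N}$ in $V$ with $b(x_n,x_{n+1})>0$ for all $n$, one has $\sum_{n\in\mathbb N}m(x_n)=\infty$. *)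

theory Defs
  imports "HOL-Analysis.Analysis"
begin

definition weighted_graph :: "('v \<Rightarrow> 'v \<Rightarrow> real) \<Rightarrow> ('v \<Rightarrow> real) \<Rightarrow> bool" where
  "weighted_graph b c \<longleftrightarrow>
     (\<forall>x y. b x y \<ge> 0) \<and> (\<forall>x. c x \<ge> 0) \<and> (\<forall>x. b x x = 0) \<and>
     (\<forall>x y. b x y = b y x) \<and> (\<forall>x. (\<lambda>y. b x y) summable_on UNIV)"

definition measure_on :: "('v \<Rightarrow> real) \<Rightarrow> bool" where
  "measure_on m \<longleftrightarrow> (\<forall>x. m x > 0)"

definition in_lp :: "real \<Rightarrow> ('v \<Rightarrow> real) \<Rightarrow> ('v \<Rightarrow> real) \<Rightarrow> bool" where
  "in_lp p m u \<longleftrightarrow> (\<lambda>x. m x * \<bar>u x\<bar> powr p) summable_on UNIV"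

definition in_Ftilde :: "('v \<Rightarrow> 'v \<Rightarrow> real) \<Rightarrow> ('v \<Rightarrow> real) \<Rightarrow> bool" where
  "in_Ftilde b u \<longleftrightarrow> (\<forall>x. (\<lambda>y. b x y * \<bar>u y\<bar>) summable_on UNIV)"

definition Ltilde :: "('v \<Rightarrow> 'v \<Rightarrow> real) \<Rightarrow> ('v \<Rightarrow> real) \<Rightarrow> ('v \<Rightarrow> real)
    \<Rightarrow> ('v \<Rightarrow> real) \<Rightarrow> 'v \<Rightarrow> real" where
  "Ltilde b c m u x = (1 / m x) * (\<Sum>\<^sub>\<infinity>y. b x y * (u x - u y)) + c x / m x * u x"

definition condition_A :: "('v \<Rightarrow> 'v \<Rightarrow> real) \<Rightarrow> ('v \<Rightarrow> real) \<Rightarrow> bool" where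
  "condition_A b m \<longleftrightarrow>
     (\<forall>xs :: nat \<Rightarrow> 'v. (\<forall>n. b (xs n) (xs (Suc n)) > 0) \<longrightarrow> \<not> summable (\<lambda>n. m (xs n)))"

end

theory Submission
  imports Defs
begin

(*
  Suppose (L + alpha) u >= 0 with alpha > 0, but u x0 < 0.  At a vertex x with
  u x < 0 the terms c x u x and alpha u x are nonpositive, the second one
  strictly, so the edge sum  sum_y b(x,y)(u x - u y)  must be positive: some
  neighbour y (b(x,y) > 0) has u y < u x.  Iterating gives an infinite path
  x0, x1, ... along edges on which u strictly decreases.  The path is injective,
  and |u x_n| >= |u x0| > 0 along it, so  m(x_n) <= m(x_n)|u x_n|^p / |u x0|^p;
  the right-hand side is summable because u is in l^p, hence so is m(x_n),
  contradicting condition (A).  The statement for (L + alpha) u = 0 follows by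
  applying the minimum principle to u and to -u, since L is odd.  The argument
  needs only p >= 0, and neither countability of V nor u in F-tilde: the edge
  sum is bounded termwise, whether or not it converges.
*)

lemma Ltilde_uminus: "Ltilde b c m (\<lambda>x. - u x) x = - Ltilde b c m u x"
proof -
  have "(\<Sum>\<^sub>\<infinity>y. b x y * (- u x - - u y)) = - (\<Sum>\<^sub>\<infinity>y. b x y * (u x - u y))"
    by (subst infsum_uminus[symmetric]) (simp add: algebra_simps)
  thus ?thesis unfolding Ltilde_def by simp
qed

text \<open>If none did, every term of the
  edge sum would be nonpositive and (L + alpha) u x <= alpha u x < 0.\<close>
lemma descent_step:
  assumes G: "weighted_graph b c" and M: "measure_on m" and alpha: "\<alpha> > 0"
    and super: "Ltilde b c m u x + \<alpha> * u x \<ge> 0" and neg: "u x < 0"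
  shows "\<exists>y. b x y > 0 \<and> u y < u x"
proof (rule ccontr)
  assume no_lower: "\<not> ?thesis"
  have term_nonpos: "b x y * (u x - u y) \<le> 0" for y
  proof (cases "b x y > 0")
    case True
    hence "u x \<le> u y" using no_lower by force
    thus ?thesis using True by (simp add: mult_nonneg_nonpos)
  next
    case False
    hence "b x y = 0" using G unfolding weighted_graph_def by (meson antisym not_le)
    thus ?thesis by simp
  qed
  have "(\<Sum>\<^sub>\<infinity>y. - (b x y * (u x - u y))) \<ge> 0"
    by (rule infsum_nonneg) (use term_nonpos in auto)
  hence edge_sum: "(\<Sum>\<^sub>\<infinity>y. b x y * (u x - u y)) \<le> 0" by (simp add: infsum_uminus)
  have mx: "m x > 0" using M by (simp add: measure_on_def)
  have cx: "c x \<ge> 0" using G by (simp add: weighted_graph_def)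
  have "(1 / m x) * (\<Sum>\<^sub>\<infinity>y. b x y * (u x - u y)) \<le> 0"
    using edge_sum mx by (simp add: divide_nonpos_pos)
  moreover have "c x / m x * u x \<le> 0" using cx mx neg by (intro mult_nonneg_nonpos) auto
  moreover have "\<alpha> * u x < 0" using alpha neg by (simp add: mult_pos_neg)
  ultimately show False using super unfolding Ltilde_def by linarith
qed

lemma descending_path:
  assumes step: "\<And>x. u x < 0 \<Longrightarrow> \<exists>y. b x y > 0 \<and> u y < u x"
    and start: "u x0 < (0::real)"
  obtains xs where "xs 0 = x0"
    and "\<And>n. b (xs n) (xs (Suc n)) > (0::real) \<and> u (xs (Suc n)) < u (xs n)"
proof -
  have "\<exists>xs. \<forall>n. (u (xs n) < 0 \<and> (n = 0 \<longrightarrow> xs n = x0))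
          \<and> (b (xs n) (xs (Suc n)) > 0 \<and> u (xs (Suc n)) < u (xs n))"
  proof (rule dependent_nat_choice)
    show "\<exists>x. u x < 0 \<and> (0 = (0::nat) \<longrightarrow> x = x0)" using start by blast
  next
    fix x and n :: nat assume "u x < 0 \<and> (n = 0 \<longrightarrow> x = x0)"
    then obtain y where "b x y > 0" "u y < u x" using step by blast
    thus "\<exists>y. (u y < 0 \<and> (Suc n = 0 \<longrightarrow> y = x0)) \<and> b x y > 0 \<and> u y < u x"
      using \<open>u x < 0 \<and> _\<close> by (auto intro: less_trans)
  qed
  thus ?thesis using that by blast
qed

lemma strictly_decreasing_values_inj:
  fixes u :: "'v \<Rightarrow> real"
  assumes "\<And>n. u (xs (Suc n)) < u (xs n)"
  shows "inj xs"
proof -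
  have "strict_mono ((\<lambda>x. - u x) \<circ> xs)"
    using assms by (simp add: strict_mono_Suc_iff)
  thus ?thesis by (rule inj_on_imageI2[OF strict_mono_imp_inj_on])
qed

lemma lp_weight_summable_along:
  assumes "in_lp p m u" and "inj xs"
  shows "summable (\<lambda>n. m (xs n) * \<bar>u (xs n)\<bar> powr p)"
proof -
  let ?g = "\<lambda>x. m x * \<bar>u x\<bar> powr p"
  have "?g summable_on UNIV" using assms(1) by (simp add: in_lp_def)
  hence "?g summable_on range xs" by (rule summable_on_subset_banach) auto
  hence "(?g \<circ> xs) summable_on UNIV" using summable_on_reindex[OF assms(2), of ?g] by simp
  thus ?thesis by (auto dest: summable_on_imp_summable simp: o_def)
qed

lemma summable_if_weighted_summable:
  fixes a w :: "nat \<Rightarrow> real"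
  assumes sw: "summable (\<lambda>n. a n * w n)" and a: "\<And>n. a n \<ge> 0"
    and K: "K > 0" and w: "\<And>n. w n \<ge> K"
  shows "summable a"
proof (rule summable_comparison_test'[OF summable_divide[OF sw, of K], of 0])
  fix n
  have "a n * K \<le> a n * w n" using a w by (simp add: mult_left_mono)
  thus "norm (a n) \<le> a n * w n / K" using a K by (simp add: pos_le_divide_eq)
qed

lemma minimum_principle:
  assumes G: "weighted_graph b c" and M: "measure_on m" and A: "condition_A b m"
    and alpha: "\<alpha> > 0" and p: "p \<ge> 0" and ulp: "in_lp p m u"
    and super: "\<forall>x. Ltilde b c m u x + \<alpha> * u x \<ge> 0"
  shows "u x0 \<ge> 0"
proof (rule ccontr)
  assume "\<not> u x0 \<ge> 0"
  hence x0: "u x0 < 0" by simp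
  obtain xs where xs0: "xs 0 = x0"
    and path: "\<And>n. b (xs n) (xs (Suc n)) > 0 \<and> u (xs (Suc n)) < u (xs n)"
    using descending_path[OF descent_step[OF G M alpha super[rule_format]] x0] by blast
  have below_start: "u (xs n) \<le> u x0" for n
    using path xs0 by (induction n) (auto intro: order.trans less_imp_le)
  have weights: "summable (\<lambda>n. m (xs n) * \<bar>u (xs n)\<bar> powr p)"
    using lp_weight_summable_along[OF ulp strictly_decreasing_values_inj] path by blast
  have bound: "\<bar>u x0\<bar> powr p \<le> \<bar>u (xs n)\<bar> powr p" for n
    using below_start[of n] x0 p by (intro powr_mono2) auto
  have "summable (\<lambda>n. m (xs n))"
    using M x0 bound
    by (intro summable_if_weighted_summable[OF weights, of "\<bar>u x0\<bar> powr p"])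
       (auto simp: measure_on_def less_imp_le)
  moreover have "\<not> summable (\<lambda>n. m (xs n))"
    using A path unfolding condition_A_def by blast
  ultimately show False by contradiction
qed

theorem mainTheorem3:
  fixes b :: "'v \<Rightarrow> 'v \<Rightarrow> real" and c m u :: "'v \<Rightarrow> real"
    and \<alpha> p :: real
  assumes V: "countable (UNIV :: 'v set)" "infinite (UNIV :: 'v set)"
    and G: "weighted_graph b c" and M: "measure_on m"
    and A: "condition_A b m"
    and alpha: "\<alpha> > 0" and p: "p \<ge> 1"
    and ulp: "in_lp p m u" and uF: "in_Ftilde b u"
  shows "((\<forall>x. Ltilde b c m u x + \<alpha> * u x \<ge> 0) \<longrightarrow> (\<forall>x. u x \<ge> 0))
       \<and> ((\<forall>x. Ltilde b c m u x + \<alpha> * u x = 0) \<longrightarrow> (\<forall>x. u x = 0))"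
proof -
  have p_nonneg: "p \<ge> 0" using p by simp
  show ?thesis
  proof (intro conjI impI allI)
    fix x assume "\<forall>x. Ltilde b c m u x + \<alpha> * u x \<ge> 0"
    thus "u x \<ge> 0" by (rule minimum_principle[OF G M A alpha p_nonneg ulp])
  next
    fix x assume sol: "\<forall>x. Ltilde b c m u x + \<alpha> * u x = 0"
    have "u x \<ge> 0" using minimum_principle[OF G M A alpha p_nonneg ulp] sol by simp
    moreover have "(\<lambda>x. - u x) x \<ge> 0"
    proof (rule minimum_principle[OF G M A alpha p_nonneg])
      show "in_lp p m (\<lambda>x. - u x)" using ulp by (simp add: in_lp_def)
      show "\<forall>y. Ltilde b c m (\<lambda>x. - u x) y + \<alpha> * - u y \<ge> 0"
        using sol by (simp add: Ltilde_uminus add_eq_0_iff)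
    qed
    ultimately show "u x = 0" by simp
  qed
qed

end
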